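(* Let $m_1,m_2$ be positive integers. If $\Delta(\mathcal{T},m_1)$ and $\Delta(\mathcal{T},m_2)$ are isomorphic as unlabelled directed graphs, then $m_1=m_2$.
   Context: A quasi-array of size $m$ is an array $Q$ with cells $(i,j)$, $1\le i\le m$, $1\le j\le m-i+1$, each containing a positive integer $Q_{(i,j)}$, with $Q_{(1,j)}\le Q_{(1,j+1)}$ and $Q_{(i,j)}=Q_{(1,i+j-1)}+i-1$. The $k$-th diagonal is the set of cells $(i,j)$ with $i+j-1=k$. For $Q$ of size $m$: $D_m$ is always defined and adds $1$ to every entry of the $m$-th diagonal; for $1\le k\le m-1$, $D_k$ is defined iff $Q_{(1,k)}<Q_{(1,k+1)}$, and then adds $1$ to every entry of the $k$-th diagonal; $D_k$ is undefined for $k>m$. $\Delta(\mathcal{T},m)$ is the directed graph whose vertices are the quasi-arrays of size $m$, with an edge $Q\to D_k(Q)$ labelled $k$ whenever $D_k$ is defined on $Q$. *)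

theory Defs
  imports Main
begin

text \<open>A quasi-array of size m is represented as a function Q :: nat => nat => nat,
  where Q i j is the entry in cell (i,j); outside the cells the value is fixed to 0
  so that each quasi-array has a unique representation.\<close>

definition qa_cells :: "nat \<Rightarrow> (nat \<times> nat) set" where
  "qa_cells m = {(i, j). 1 \<le> i \<and> i \<le> m \<and> 1 \<le> j \<and> j \<le> m - i + 1}"

definition quasi_array :: "nat \<Rightarrow> (nat \<Rightarrow> nat \<Rightarrow> nat) \<Rightarrow> bool" where
  "quasi_array m Q \<longleftrightarrow>
     (\<forall>(i, j) \<in> qa_cells m. 0 < Q i j) \<and>
     (\<forall>i j. (i, j) \<notin> qa_cells m \<longrightarrow> Q i j = 0) \<and>
     (\<forall>j. 1 \<le> j \<and> j < m \<longrightarrow> Q 1 j \<le> Q 1 (j + 1)) \<and>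
     (\<forall>(i, j) \<in> qa_cells m. Q i j = Q 1 (i + j - 1) + (i - 1))"

definition qa_D :: "nat \<Rightarrow> nat \<Rightarrow> (nat \<Rightarrow> nat \<Rightarrow> nat) \<Rightarrow> (nat \<Rightarrow> nat \<Rightarrow> nat)" where
  "qa_D m k Q = (\<lambda>i j. if (i, j) \<in> qa_cells m \<and> i + j - 1 = k then Q i j + 1 else Q i j)"

definition qa_D_defined :: "nat \<Rightarrow> nat \<Rightarrow> (nat \<Rightarrow> nat \<Rightarrow> nat) \<Rightarrow> bool" where
  "qa_D_defined m k Q \<longleftrightarrow> 1 \<le> k \<and> (k = m \<or> (k < m \<and> Q 1 k < Q 1 (k + 1)))"

definition Delta_V :: "nat \<Rightarrow> (nat \<Rightarrow> nat \<Rightarrow> nat) set" where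
  "Delta_V m = {Q. quasi_array m Q}"

definition Delta_E :: "nat \<Rightarrow> (nat \<Rightarrow> nat \<Rightarrow> nat) \<Rightarrow> (nat \<Rightarrow> nat \<Rightarrow> nat) \<Rightarrow> bool" where
  "Delta_E m Q Q' \<longleftrightarrow> Q \<in> Delta_V m \<and> (\<exists>k. qa_D_defined m k Q \<and> Q' = qa_D m k Q)"

definition Delta_iso :: "nat \<Rightarrow> nat \<Rightarrow> bool" where
  "Delta_iso m1 m2 \<longleftrightarrow> (\<exists>f. bij_betw f (Delta_V m1) (Delta_V m2) \<and>
     (\<forall>P \<in> Delta_V m1. \<forall>Q \<in> Delta_V m1. Delta_E m1 P Q \<longleftrightarrow> Delta_E m2 (f P) (f Q)))"

end

theory Submission
  imports Defs
begin

text \<open>A graph isomorphism preserves out-degrees, so the set of out-degrees of \<open>\<Delta>(\<T>, m)\<close> is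
  an isomorphism invariant. Its maximum is \<open>m\<close>: a vertex has at most the \<open>m\<close> successors
  \<open>D\<^sub>1 Q, \<dots>, D\<^sub>m Q\<close>, and the quasi-array with strictly increasing first row \<open>1, 2, \<dots>, m\<close>
  has all of them, pairwise distinct.\<close>

lemma out_degrees_bij_betw:
  assumes "bij_betw f V W"
    and "\<forall>P \<in> V. \<forall>Q \<in> V. E P Q \<longleftrightarrow> E' (f P) (f Q)"
  shows "(\<lambda>P. card {Q \<in> V. E P Q}) ` V = (\<lambda>P. card {Q \<in> W. E' P Q}) ` W"
proof -
  have surj: "f ` V = W"
    using assms(1) by (rule bij_betw_imp_surj_on)
  have inj: "inj_on f V"
    using assms(1) by (rule bij_betw_imp_inj_on)
  have "card {Q \<in> W. E' (f P) Q} = card {Q \<in> V. E P Q}" if "P \<in> V" for P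
  proof -
    have "{Q \<in> W. E' (f P) Q} = f ` {Q \<in> V. E' (f P) (f Q)}"
      unfolding surj[symmetric] by blast
    also have "{Q \<in> V. E' (f P) (f Q)} = {Q \<in> V. E P Q}"
      using assms(2) \<open>P \<in> V\<close> by blast
    finally show ?thesis
      using inj by (simp add: card_image inj_on_subset)
  qed
  then have "(\<lambda>P. card {Q \<in> V. E P Q}) ` V = (\<lambda>P. card {Q \<in> W. E' P Q}) ` f ` V"
    unfolding image_image by (rule image_cong[OF refl, symmetric])
  then show ?thesis
    unfolding surj .
qed

definition Delta_succs :: "nat \<Rightarrow> (nat \<Rightarrow> nat \<Rightarrow> nat) \<Rightarrow> (nat \<Rightarrow> nat \<Rightarrow> nat) set" where
  "Delta_succs m P = {Q \<in> Delta_V m. Delta_E m P Q}"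

definition Delta_out_degrees :: "nat \<Rightarrow> nat set" where
  "Delta_out_degrees m = (\<lambda>P. card (Delta_succs m P)) ` Delta_V m"

lemma Delta_out_degrees_eq_if_iso:
  assumes "Delta_iso m1 m2"
  shows "Delta_out_degrees m1 = Delta_out_degrees m2"
proof -
  from assms obtain f where "bij_betw f (Delta_V m1) (Delta_V m2)"
    and "\<forall>P \<in> Delta_V m1. \<forall>Q \<in> Delta_V m1. Delta_E m1 P Q \<longleftrightarrow> Delta_E m2 (f P) (f Q)"
    unfolding Delta_iso_def by blast
  then show ?thesis
    unfolding Delta_out_degrees_def Delta_succs_def
    by (rule out_degrees_bij_betw[where E = "Delta_E m1" and E' = "Delta_E m2"])
qed

lemma Delta_succs_subset: "Delta_succs m P \<subseteq> (\<lambda>k. qa_D m k P) ` {1..m}"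
  unfolding Delta_succs_def Delta_E_def qa_D_defined_def by auto

lemma card_Delta_succs_le: "card (Delta_succs m P) \<le> m"
proof -
  have "card (Delta_succs m P) \<le> card ((\<lambda>k. qa_D m k P) ` {1..m})"
    using Delta_succs_subset by (rule card_mono[rotated]) simp
  also have "\<dots> \<le> m"
    using card_image_le[of "{1..m}" "\<lambda>k. qa_D m k P"] by simp
  finally show ?thesis .
qed

definition qa_staircase :: "nat \<Rightarrow> nat \<Rightarrow> nat \<Rightarrow> nat" where
  "qa_staircase m = (\<lambda>i j. if (i, j) \<in> qa_cells m then 2 * i + j - 2 else 0)"

lemma qa_staircase_in_Delta_V: "qa_staircase m \<in> Delta_V m"
  unfolding Delta_V_def quasi_array_def qa_staircase_def qa_cells_def by auto

lemma qa_D_qa_staircase_in_Delta_V: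
  assumes "1 \<le> k" "k \<le> m"
  shows "qa_D m k (qa_staircase m) \<in> Delta_V m"
  using assms unfolding Delta_V_def quasi_array_def qa_staircase_def qa_cells_def qa_D_def
  by auto

lemma Delta_succs_qa_staircase:
  "Delta_succs m (qa_staircase m) = (\<lambda>k. qa_D m k (qa_staircase m)) ` {1..m}"
proof
  show "(\<lambda>k. qa_D m k (qa_staircase m)) ` {1..m} \<subseteq> Delta_succs m (qa_staircase m)"
  proof
    fix Q assume "Q \<in> (\<lambda>k. qa_D m k (qa_staircase m)) ` {1..m}"
    then obtain k where k: "k \<in> {1..m}" "Q = qa_D m k (qa_staircase m)" by auto
    then have "qa_D_defined m k (qa_staircase m)"
      unfolding qa_D_defined_def qa_staircase_def qa_cells_def by auto
    with k show "Q \<in> Delta_succs m (qa_staircase m)"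
      using qa_D_qa_staircase_in_Delta_V[of k m] qa_staircase_in_Delta_V[of m]
      unfolding Delta_succs_def Delta_E_def by auto
  qed
qed (rule Delta_succs_subset)

lemma card_Delta_succs_qa_staircase: "card (Delta_succs m (qa_staircase m)) = m"
proof -
  have "inj_on (\<lambda>k. qa_D m k (qa_staircase m)) {1..m}"
  proof (rule inj_onI)
    fix k k'
    assume range: "k \<in> {1..m}" "k' \<in> {1..m}"
      and "qa_D m k (qa_staircase m) = qa_D m k' (qa_staircase m)"
    then have "qa_D m k (qa_staircase m) 1 k = qa_D m k' (qa_staircase m) 1 k"
      by simp
    with range show "k = k'"
      unfolding qa_D_def qa_staircase_def qa_cells_def by (auto split: if_splits)
  qed
  then show ?thesis
    unfolding Delta_succs_qa_staircase by (simp add: card_image)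
qed

lemma Max_Delta_out_degrees: "Max (Delta_out_degrees m) = m"
proof (rule Max_eqI)
  have "Delta_out_degrees m \<subseteq> {..m}"
    unfolding Delta_out_degrees_def using card_Delta_succs_le by auto
  then show "finite (Delta_out_degrees m)"
    by (rule finite_subset) simp
  show "d \<le> m" if "d \<in> Delta_out_degrees m" for d
    using that card_Delta_succs_le unfolding Delta_out_degrees_def by auto
  show "m \<in> Delta_out_degrees m"
    unfolding Delta_out_degrees_def
    by (rule image_eqI[where x = "qa_staircase m"])
      (simp_all add: card_Delta_succs_qa_staircase qa_staircase_in_Delta_V)
qed

theorem proposition4p3:
  fixes m1 m2 :: nat
  assumes "0 < m1" and "0 < m2"
    and "Delta_iso m1 m2"
  shows "m1 = m2"
proof -
  have "m1 = Max (Delta_out_degrees m1)"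
    by (simp add: Max_Delta_out_degrees)
  also have "\<dots> = Max (Delta_out_degrees m2)"
    using Delta_out_degrees_eq_if_iso[OF assms(3)] by simp
  also have "\<dots> = m2"
    by (rule Max_Delta_out_degrees)
  finally show ?thesis .
qed

end
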